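(* Let $\varepsilon_1>0$ and $0<k<1$. Then there exists $\alpha_0>0$ such that for every $\alpha$ with $|\alpha|\le\alpha_0$ and every $r>0$ there exists a $C^1$ area-preserving diffeomorphism $h:\mathbb{R}^2\to\mathbb{R}^2$ such that: (i) $|z|\ge r\Rightarrow h(z)=z$; (ii) $|z|\le\sqrt{k}\,r\Rightarrow h(z)=R_\alpha(z)$; (iii) $|h(z)|=|z|$ for all $z$; (iv) $|h(z)-z|\le\alpha r$ for all $z$; (v) $\|Dh_z-I\|\le\varepsilon_1$ for all $z$.
   Context: $R_\theta=\begin{pmatrix}\cos\theta&-\sin\theta\\ \sin\theta&\cos\theta\end{pmatrix}$ is the rotation of angle $\theta$; $|\cdot|$ is the Euclidean norm on $\mathbb{R}^2$. *)

theory Defs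
  imports "HOL-Analysis.Analysis"
begin

definition rot :: "real \<Rightarrow> real^2^2" where
  "rot \<theta> = vector [vector [cos \<theta>, - sin \<theta>], vector [sin \<theta>, cos \<theta>]]"

definition C1_map :: "(real^2 \<Rightarrow> real^2) \<Rightarrow> bool" where
  "C1_map f \<longleftrightarrow> (\<exists>D. (\<forall>z. (f has_derivative D z) (at z))
                      \<and> continuous_on UNIV (\<lambda>z. matrix (D z)))"

definition C1_diffeo :: "(real^2 \<Rightarrow> real^2) \<Rightarrow> bool" where
  "C1_diffeo h \<longleftrightarrow> C1_map h \<and>
     (\<exists>g. C1_map g \<and> (\<forall>z. g (h z) = z) \<and> (\<forall>z. h (g z) = z))"

definition area_preserving :: "(real^2 \<Rightarrow> real^2) \<Rightarrow> bool" where
  "area_preserving h \<longleftrightarrow> h \<in> borel_measurable borel \<and> distr lborel lborel h = lborel"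

end

theory Submission
  imports Defs
begin

(*
  The map h is a twist z \<mapsto> R_f(|z|^2) z: every circle about the origin is rotated rigidly,
  by an angle depending only on its radius. A twist preserves |z|, is inverted by the twist
  with angle -f, and its derivative v \<mapsto> R v + 2 f'(|z|^2) (z \<bullet> v) J (R z) (J the quarter
  turn) has determinant 1, so it preserves area by the change of variables formula.
  Taking f(s) = \<alpha> (1 - S ((s - k r^2) / (r^2 - k r^2))) for the cubic smoothstep S makes h
  the rotation R_\<alpha> inside radius sqrt k r and the identity outside radius r, while
  |f| + 2 |f'(s)| s \<le> |\<alpha>| (1 + 3 / (1 - k)) bounds |Dh - I|, linearly in \<alpha>.
*)

lemma has_real_derivative_at_glue:
  fixes f g h :: "real \<Rightarrow> real"
  assumes "(g has_real_derivative D) (at x within {..x})"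
    and "(h has_real_derivative D) (at x within {x..})"
    and "0 < d"
    and "\<And>y. x - d < y \<Longrightarrow> y \<le> x \<Longrightarrow> f y = g y"
    and "\<And>y. x \<le> y \<Longrightarrow> y < x + d \<Longrightarrow> f y = h y"
  shows "(f has_real_derivative D) (at x)"
proof -
  have "(f has_real_derivative D) (at x within {..x})"
    by (rule has_field_derivative_transform_within[OF assms(1,3)]) (auto simp: assms(4) dist_real_def)
  moreover have "(f has_real_derivative D) (at x within {x..})"
    by (rule has_field_derivative_transform_within[OF assms(2,3)]) (auto simp: assms(5) dist_real_def)
  moreover have "{..x} \<union> {x..} = UNIV"
    by auto
  then have "at x = sup (at x within {..x}) (at x within {x..})"
    by (metis at_within_union)
  ultimately show ?thesis
    unfolding has_field_derivative_iff by (simp add: filterlim_sup)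
qed

lemma distr_lborel_eq_if_inverse_unimodular:
  fixes h g :: "real^'n::{finite,wellorder} \<Rightarrow> real^'n::_"
  assumes h: "continuous_on UNIV h"
    and inverse: "\<And>z. g (h z) = z" "\<And>z. h (g z) = z"
    and g: "\<And>z. (g has_derivative D z) (at z)" "\<And>z. \<bar>det (matrix (D z))\<bar> = 1"
  shows "distr lborel lborel h = lborel"
proof (rule lborel_eqI[symmetric])
  fix l u :: "(real, 'n) vec" assume lu: "\<And>b. b \<in> Basis \<Longrightarrow> l \<bullet> b \<le> u \<bullet> b"
  have preimage: "h -` box l u = g ` box l u"
    using inverse by (auto intro: image_eqI[where x = "h x" for x])
  have "open (h -` box l u)"
    using h by (intro open_vimage) auto
  then have borel: "g ` box l u \<in> sets borel"
    by (simp add: preimage)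
  have "(g has_derivative D x) (at x within box l u)" for x
    using g(1) has_derivative_at_withinI by blast
  moreover have "inj_on g (box l u)"
    by (rule inj_on_inverseI[where g = h]) (rule inverse(2))
  moreover have "((\<lambda>x. \<bar>det (matrix (D x))\<bar>) has_integral measure lborel (cbox l u)) (box l u)"
    unfolding g(2) has_integral_open_interval using has_integral_const[of "1::real" l u] by simp
  ultimately have image:
      "g ` box l u \<in> lmeasurable \<and> measure lebesgue (g ` box l u) = measure lborel (cbox l u)"
    by (subst has_measure_differentiable_image) auto
  have "emeasure (distr lborel lborel h) (box l u) = emeasure lborel (g ` box l u)"
    using h borel_measurable_continuous_onI by (subst emeasure_distr) (auto simp: preimage)
  also have "\<dots> = emeasure lebesgue (g ` box l u)"
    using borel by simp
  also have "\<dots> = measure lebesgue (g ` box l u)"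
    using image by (intro emeasure_eq_measure2) blast
  also have "\<dots> = (\<Prod>b\<in>Basis. (u - l) \<bullet> b)"
    using image lu by (simp add: content_cbox inner_diff_left)
  finally show "emeasure (distr lborel lborel h) (box l u) = (\<Prod>b\<in>Basis. (u - l) \<bullet> b)" .
qed simp

definition quarter_turn :: "real^2 \<Rightarrow> real^2" where
  "quarter_turn z = vector [- z$2, z$1]"

lemma quarter_turn_nth [simp]: "quarter_turn z $ 1 = - z$2" "quarter_turn z $ 2 = z$1"
  by (simp_all add: quarter_turn_def)

lemma inner_vec_2: "(x::real^2) \<bullet> y = x$1 * y$1 + x$2 * y$2"
  by (simp add: inner_vec_def sum_2)

lemma linear_quarter_turn: "linear quarter_turn"
  by (rule linearI) (auto simp: vec_eq_iff forall_2)

lemmas bounded_linear_quarter_turn =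
  linear_quarter_turn[THEN linear_conv_bounded_linear[THEN iffD1]]

lemma continuous_on_quarter_turn [continuous_intros]:
  "continuous_on S g \<Longrightarrow> continuous_on S (\<lambda>x. quarter_turn (g x))"
  by (rule continuous_on_compose2[OF linear_continuous_on[OF bounded_linear_quarter_turn]]) auto

lemma quarter_turn_quarter_turn [simp]: "quarter_turn (quarter_turn v) = - v"
  by (simp add: vec_eq_iff forall_2)

lemma inner_quarter_turn [simp]:
  "quarter_turn v \<bullet> quarter_turn w = v \<bullet> w" "v \<bullet> quarter_turn v = 0" "quarter_turn v \<bullet> v = 0"
  by (auto simp: inner_vec_2 algebra_simps)

lemma norm_quarter_turn [simp]: "norm (quarter_turn v) = norm v"
  by (simp add: norm_eq_sqrt_inner)

lemma rot_mult_eq: "rot \<theta> *v z = cos \<theta> *\<^sub>R z + sin \<theta> *\<^sub>R quarter_turn z"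
  by (simp add: vec_eq_iff forall_2 rot_def matrix_vector_mult_def sum_2)

lemma rot_rot: "rot \<theta> *v (rot \<phi> *v z) = rot (\<theta> + \<phi>) *v z"
  by (simp add: rot_mult_eq linear_add[OF linear_quarter_turn] linear_cmul[OF linear_quarter_turn]
      cos_add sin_add algebra_simps)

lemma rot_zero [simp]: "rot 0 *v z = z"
  by (simp add: rot_mult_eq)

lemma norm_cos_sin_combination:
  "norm (c *\<^sub>R v + s *\<^sub>R quarter_turn v) = sqrt (c\<^sup>2 + s\<^sup>2) * norm v"
proof -
  have "(c *\<^sub>R v + s *\<^sub>R quarter_turn v) \<bullet> (c *\<^sub>R v + s *\<^sub>R quarter_turn v) = (c\<^sup>2 + s\<^sup>2) * (v \<bullet> v)"
    by (simp add: inner_commute[of "quarter_turn v"] power2_eq_square algebra_simps)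
  then show ?thesis
    by (simp add: norm_eq_sqrt_inner real_sqrt_mult)
qed

lemma norm_rot [simp]: "norm (rot \<theta> *v z) = norm z"
  by (simp add: rot_mult_eq norm_cos_sin_combination)

lemma norm_rot_minus_le: "norm (rot \<theta> *v v - v) \<le> \<bar>\<theta>\<bar> * norm v"
proof -
  have "rot \<theta> *v v - v = (cos \<theta> - 1) *\<^sub>R v + sin \<theta> *\<^sub>R quarter_turn v"
    by (simp add: rot_mult_eq algebra_simps)
  then have "norm (rot \<theta> *v v - v) = sqrt ((cos \<theta> - 1)\<^sup>2 + (sin \<theta>)\<^sup>2) * norm v"
    by (simp add: norm_cos_sin_combination)
  also have "(cos \<theta> - 1)\<^sup>2 + (sin \<theta>)\<^sup>2 = 2 - 2 * cos \<theta>"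
    by (simp add: power2_diff sin_squared_eq)
  also have "\<dots> = (2 * sin (\<theta>/2))\<^sup>2"
    using cos_double_sin[of "\<theta>/2"] by (simp add: power_mult_distrib)
  also have "sqrt \<dots> = 2 * \<bar>sin (\<theta>/2)\<bar>"
    unfolding real_sqrt_abs by (simp add: abs_mult)
  also have "\<dots> \<le> \<bar>\<theta>\<bar>"
    using abs_sin_x_le_abs_x[of "\<theta>/2"] by simp
  finally show ?thesis
    by (simp add: mult_right_mono)
qed

definition twist :: "(real \<Rightarrow> real) \<Rightarrow> real^2 \<Rightarrow> real^2" where
  "twist f z = rot (f (z \<bullet> z)) *v z"

definition twist_derivative ::
    "(real \<Rightarrow> real) \<Rightarrow> (real \<Rightarrow> real) \<Rightarrow> real^2 \<Rightarrow> real^2 \<Rightarrow> real^2" where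
  "twist_derivative f f' z v =
     rot (f (z \<bullet> z)) *v v + (2 * f' (z \<bullet> z) * (z \<bullet> v)) *\<^sub>R quarter_turn (twist f z)"

lemma norm_twist [simp]: "norm (twist f z) = norm z"
  by (simp add: twist_def)

lemma inner_twist_self [simp]: "twist f z \<bullet> twist f z = z \<bullet> z"
  by (simp flip: power2_norm_eq_inner)

lemma twist_uminus_twist [simp]: "twist (\<lambda>s. - f s) (twist f z) = z"
  unfolding twist_def[of "\<lambda>s. - f s"] inner_twist_self by (simp add: twist_def rot_rot)

lemma twist_twist_uminus [simp]: "twist f (twist (\<lambda>s. - f s) z) = z"
  using twist_uminus_twist[of "\<lambda>s. - f s" z] by simp

lemma twist_eq_self: "f (z \<bullet> z) = 0 \<Longrightarrow> twist f z = z"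
  by (simp add: twist_def)

lemma has_derivative_twist:
  assumes "\<And>s. (f has_real_derivative f' s) (at s)"
  shows "(twist f has_derivative twist_derivative f f' z) (at z)"
proof -
  have angle: "((\<lambda>x. f (x \<bullet> x)) has_derivative (\<lambda>v. (z \<bullet> v + v \<bullet> z) * f' (z \<bullet> z))) (at z)"
    by (rule DERIV_compose_FDERIV[OF assms]) (auto intro!: derivative_eq_intros)
  have cos_sin: "twist f = (\<lambda>x. cos (f (x \<bullet> x)) *\<^sub>R x + sin (f (x \<bullet> x)) *\<^sub>R quarter_turn x)"
    by (simp add: twist_def rot_mult_eq fun_eq_iff)
  show ?thesis
    unfolding cos_sin
    by (rule has_derivative_eq_rhs,
        (rule derivative_eq_intros angle has_derivative_ident refl
          bounded_linear.has_derivative[OF bounded_linear_quarter_turn])+)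
      (simp add: fun_eq_iff twist_derivative_def twist_def rot_mult_eq inner_commute
        linear_add[OF linear_quarter_turn] linear_cmul[OF linear_quarter_turn] algebra_simps)
qed

lemma det_twist_derivative: "det (matrix (twist_derivative f f' z)) = 1"
proof -
  define c s t where "c = cos (f (z \<bullet> z))" and "s = sin (f (z \<bullet> z))" and "t = 2 * f' (z \<bullet> z)"
  have "c\<^sup>2 + s\<^sup>2 = 1"
    by (simp add: c_def s_def)
  then have "(c + t * z$1 * (- c * z$2 - s * z$1)) * (c + t * z$2 * (c * z$1 - s * z$2))
      - (t * z$2 * (- c * z$2 - s * z$1) - s) * (s + t * z$1 * (c * z$1 - s * z$2)) = 1"
    by algebra
  then show ?thesis
    by (simp add: det_2 matrix_def twist_derivative_def twist_def rot_mult_eq inner_vec_2 axis_def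
        c_def s_def t_def algebra_simps)
qed

lemma continuous_on_matrix_twist_derivative:
  assumes "\<And>s. (f has_real_derivative f' s) (at s)" and "continuous_on UNIV f'"
  shows "continuous_on UNIV (\<lambda>z. matrix (twist_derivative f f' z))"
proof -
  have "continuous_on UNIV f"
    using assms(1) DERIV_isCont continuous_at_imp_continuous_on by blast
  moreover have "continuous_on UNIV (\<lambda>z::real^2. g (z \<bullet> z))" if "continuous_on UNIV g" for g
    using continuous_on_compose2[OF that continuous_on_inner[OF continuous_on_id continuous_on_id]]
    by simp
  ultimately have "continuous_on UNIV (\<lambda>z::real^2. f (z \<bullet> z))" "continuous_on UNIV (\<lambda>z::real^2. f' (z \<bullet> z))"
    using assms(2) by blast+
  then show ?thesis
    unfolding matrix_def twist_derivative_def twist_def rot_mult_eq by (intro continuous_intros)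
qed

lemma C1_diffeo_twist:
  assumes "\<And>s. (f has_real_derivative f' s) (at s)" and "continuous_on UNIV f'"
  shows "C1_diffeo (twist f)"
proof -
  have C1: "C1_map (twist g)" if "\<And>s. (g has_real_derivative g' s) (at s)" "continuous_on UNIV g'"
    for g g'
    unfolding C1_map_def
    using has_derivative_twist[OF that(1)] continuous_on_matrix_twist_derivative[OF that] by blast
  have "C1_map (twist (\<lambda>s. - f s))"
    using assms by (intro C1[of _ "\<lambda>s. - f' s"] derivative_intros continuous_intros)
  then show ?thesis
    unfolding C1_diffeo_def using C1[OF assms] by auto
qed

lemma area_preserving_twist:
  assumes "\<And>s. (f has_real_derivative f' s) (at s)"
  shows "area_preserving (twist f)"
proof -
  have continuous: "continuous_on UNIV (twist f)"
    using has_derivative_twist[OF assms] has_derivative_continuous continuous_at_imp_continuous_on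
    by blast
  have "\<And>s. ((\<lambda>s. - f s) has_real_derivative - f' s) (at s)"
    using assms by (auto intro!: derivative_eq_intros)
  then have "distr lborel lborel (twist f) = lborel"
    by (intro distr_lborel_eq_if_inverse_unimodular[OF continuous twist_uminus_twist twist_twist_uminus
        has_derivative_twist]) (simp_all add: det_twist_derivative)
  then show ?thesis
    unfolding area_preserving_def using continuous borel_measurable_continuous_onI by blast
qed

lemma norm_twist_minus_le: "norm (twist f z - z) \<le> \<bar>f (z \<bullet> z)\<bar> * norm z"
  unfolding twist_def by (rule norm_rot_minus_le)

lemma onorm_twist_derivative_minus_le:
  "onorm (\<lambda>v. twist_derivative f f' z v - v) \<le> \<bar>f (z \<bullet> z)\<bar> + 2 * \<bar>f' (z \<bullet> z)\<bar> * (z \<bullet> z)"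
proof (rule onorm_le)
  fix v
  let ?\<theta> = "f (z \<bullet> z)" and ?w = "(2 * f' (z \<bullet> z) * (z \<bullet> v)) *\<^sub>R quarter_turn (twist f z)"
  have "norm ?w = 2 * \<bar>f' (z \<bullet> z)\<bar> * \<bar>z \<bullet> v\<bar> * norm z"
    by (simp add: abs_mult)
  also have "\<dots> \<le> 2 * \<bar>f' (z \<bullet> z)\<bar> * (norm z * norm v) * norm z"
    by (intro mult_right_mono mult_left_mono Cauchy_Schwarz_ineq2) auto
  also have "\<dots> = 2 * \<bar>f' (z \<bullet> z)\<bar> * (z \<bullet> z) * norm v"
    by (simp add: dot_square_norm power2_eq_square)
  finally have "norm ?w \<le> 2 * \<bar>f' (z \<bullet> z)\<bar> * (z \<bullet> z) * norm v" .
  moreover have "twist_derivative f f' z v - v = (rot ?\<theta> *v v - v) + ?w"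
    by (simp add: twist_derivative_def)
  then have "norm (twist_derivative f f' z v - v) \<le> norm (rot ?\<theta> *v v - v) + norm ?w"
    by (metis norm_triangle_ineq)
  ultimately show "norm (twist_derivative f f' z v - v)
      \<le> (\<bar>f (z \<bullet> z)\<bar> + 2 * \<bar>f' (z \<bullet> z)\<bar> * (z \<bullet> z)) * norm v"
    using norm_rot_minus_le[of ?\<theta> v] by (simp add: algebra_simps)
qed

definition smoothstep :: "real \<Rightarrow> real" where
  "smoothstep t = (if t \<le> 0 then 0 else if t \<le> 1 then 3 * t\<^sup>2 - 2 * t ^ 3 else 1)"

definition smoothstep' :: "real \<Rightarrow> real" where
  "smoothstep' t = 6 * max 0 (min 1 t) * (1 - max 0 (min 1 t))"

lemma has_real_derivative_smoothstep: "(smoothstep has_real_derivative smoothstep' t) (at t)"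
proof -
  define p :: "real \<Rightarrow> real" where "p t = 3 * t\<^sup>2 - 2 * t ^ 3" for t
  have p: "(p has_real_derivative 6 * t * (1 - t)) (at t within S)" for t S
    unfolding p_def by (auto intro!: derivative_eq_intros simp: power2_eq_square algebra_simps)
  consider "t < 0" | "t = 0" | "0 < t" "t < 1" | "t = 1" | "1 < t"
    by linarith
  then show ?thesis
  proof cases
    case 1
    have "(smoothstep has_real_derivative 0) (at t)"
      by (rule has_field_derivative_transform_within_open[OF DERIV_const, where S = "{..<0}"])
        (use 1 in \<open>auto simp: smoothstep_def\<close>)
    then show ?thesis
      using 1 by (simp add: smoothstep'_def)
  next
    case 2
    have "smoothstep y = p y" if "0 \<le> y" "y < 1" for y
      using that by (cases "y = 0") (auto simp: smoothstep_def p_def)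
    then have "(smoothstep has_real_derivative 0) (at 0)"
      using p[of 0 "{0..}"]
      by (intro has_real_derivative_at_glue[OF DERIV_const _ zero_less_one, where h = p])
        (auto simp: smoothstep_def)
    then show ?thesis
      using 2 by (simp add: smoothstep'_def)
  next
    case 3
    have "(smoothstep has_real_derivative 6 * t * (1 - t)) (at t)"
      by (rule has_field_derivative_transform_within_open[OF p, where S = "{0<..<1}"])
        (use 3 in \<open>auto simp: smoothstep_def p_def\<close>)
    then show ?thesis
      using 3 by (simp add: smoothstep'_def)
  next
    case 4
    have "smoothstep y = 1" if "1 \<le> y" for y
      using that by (cases "y = 1") (auto simp: smoothstep_def)
    then have "(smoothstep has_real_derivative 0) (at 1)"
      using p[of 1 "{..1}"]
      by (intro has_real_derivative_at_glue[OF _ DERIV_const zero_less_one, where g = p])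
        (auto simp: smoothstep_def p_def)
    then show ?thesis
      using 4 by (simp add: smoothstep'_def)
  next
    case 5
    have "(smoothstep has_real_derivative 0) (at t)"
      by (rule has_field_derivative_transform_within_open[OF DERIV_const, where S = "{1<..}"])
        (use 5 in \<open>auto simp: smoothstep_def\<close>)
    then show ?thesis
      using 5 by (simp add: smoothstep'_def)
  qed
qed

lemma continuous_on_smoothstep': "continuous_on S smoothstep'"
  unfolding smoothstep'_def by (intro continuous_intros)

lemma smoothstep_nonpos: "t \<le> 0 \<Longrightarrow> smoothstep t = 0"
  and smoothstep_ge_one: "1 \<le> t \<Longrightarrow> smoothstep t = 1"
  and smoothstep'_ge_one: "1 \<le> t \<Longrightarrow> smoothstep' t = 0"
  by (auto simp: smoothstep_def smoothstep'_def)

lemma smoothstep_bounds: "0 \<le> smoothstep t" "smoothstep t \<le> 1"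
proof -
  have "0 \<le> t\<^sup>2 * (3 - 2 * t)" "0 \<le> (1 - t)\<^sup>2 * (1 + 2 * t)" if "0 \<le> t" "t \<le> 1"
    using that by simp_all
  then show "0 \<le> smoothstep t" "smoothstep t \<le> 1"
    by (auto simp: smoothstep_def power2_eq_square power3_eq_cube algebra_simps)
qed

lemma smoothstep'_bounds: "0 \<le> smoothstep' t" "smoothstep' t \<le> 3/2"
proof -
  define c where "c = max 0 (min 1 t)"
  have "0 \<le> c" "c \<le> 1"
    by (auto simp: c_def)
  moreover have "6 * c * (1 - c) \<le> 3/2"
    using zero_le_power2[of "2 * c - 1"] by (simp add: power2_eq_square algebra_simps)
  ultimately show "0 \<le> smoothstep' t" "smoothstep' t \<le> 3/2"
    unfolding smoothstep'_def c_def[symmetric] by simp_all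
qed

definition twist_angle :: "real \<Rightarrow> real \<Rightarrow> real \<Rightarrow> real \<Rightarrow> real" where
  "twist_angle a b \<alpha> s = \<alpha> * (1 - smoothstep ((s - a) / (b - a)))"

definition twist_angle' :: "real \<Rightarrow> real \<Rightarrow> real \<Rightarrow> real \<Rightarrow> real" where
  "twist_angle' a b \<alpha> s = - \<alpha> * smoothstep' ((s - a) / (b - a)) / (b - a)"

lemma has_real_derivative_twist_angle:
  "(twist_angle a b \<alpha> has_real_derivative twist_angle' a b \<alpha> s) (at s)"
proof -
  have "((\<lambda>s. (s - a) / (b - a)) has_real_derivative 1 / (b - a)) (at s)"
    unfolding divide_inverse by (auto intro!: derivative_eq_intros)
  from DERIV_chain2[OF has_real_derivative_smoothstep this]
  show ?thesis
    unfolding twist_angle_def twist_angle'_def by (auto intro!: derivative_eq_intros)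
qed

lemma continuous_on_twist_angle': "continuous_on S (twist_angle' a b \<alpha>)"
  unfolding twist_angle'_def divide_inverse
  by (intro continuous_intros continuous_on_compose2[OF continuous_on_smoothstep'[of UNIV]]) auto

lemma twist_angle_inner: "a < b \<Longrightarrow> s \<le> a \<Longrightarrow> twist_angle a b \<alpha> s = \<alpha>"
  and twist_angle_outer: "a < b \<Longrightarrow> b \<le> s \<Longrightarrow> twist_angle a b \<alpha> s = 0"
  by (simp_all add: twist_angle_def smoothstep_nonpos smoothstep_ge_one divide_nonpos_pos)

lemma abs_twist_angle_le: "\<bar>twist_angle a b \<alpha> s\<bar> \<le> \<bar>\<alpha>\<bar>"
  using smoothstep_bounds[of "(s - a) / (b - a)"]
  by (simp add: twist_angle_def abs_mult mult_left_le)

lemma abs_twist_angle'_mult_le: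
  assumes "0 \<le> a" and "a < b" and "0 \<le> s"
  shows "\<bar>twist_angle' a b \<alpha> s\<bar> * s \<le> 3/2 * \<bar>\<alpha>\<bar> * b / (b - a)"
proof (cases "s < b")
  case True
  have "\<bar>twist_angle' a b \<alpha> s\<bar> = \<bar>\<alpha>\<bar> * smoothstep' ((s - a) / (b - a)) / (b - a)"
    using assms smoothstep'_bounds(1) by (simp add: twist_angle'_def abs_mult)
  also have "\<dots> \<le> \<bar>\<alpha>\<bar> * (3/2) / (b - a)"
    using assms smoothstep'_bounds(2) by (intro divide_right_mono mult_left_mono) auto
  finally have "\<bar>twist_angle' a b \<alpha> s\<bar> * s \<le> \<bar>\<alpha>\<bar> * (3/2) / (b - a) * b"
    using assms True by (intro mult_mono) auto
  then show ?thesis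
    using assms by (simp add: field_simps)
next
  case False
  then have "smoothstep' ((s - a) / (b - a)) = 0"
    using assms by (intro smoothstep'_ge_one) simp
  then show ?thesis
    using assms by (simp add: twist_angle'_def)
qed

lemma twist_twist_angle_inner: "a < b \<Longrightarrow> z \<bullet> z \<le> a \<Longrightarrow> twist (twist_angle a b \<alpha>) z = rot \<alpha> *v z"
  by (simp add: twist_def twist_angle_inner)

lemma twist_twist_angle_outer: "a < b \<Longrightarrow> b \<le> z \<bullet> z \<Longrightarrow> twist (twist_angle a b \<alpha>) z = z"
  by (simp add: twist_eq_self twist_angle_outer)

lemma norm_twist_twist_angle_minus_le:
  assumes "0 \<le> a" and "a < b"
  shows "norm (twist (twist_angle a b \<alpha>) z - z) \<le> \<bar>\<alpha>\<bar> * sqrt b"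
proof (cases "b \<le> z \<bullet> z")
  case True
  then show ?thesis
    using assms by (simp add: twist_twist_angle_outer)
next
  case False
  then have "norm z \<le> sqrt b"
    by (simp add: norm_eq_sqrt_inner)
  have "norm (twist (twist_angle a b \<alpha>) z - z) \<le> \<bar>twist_angle a b \<alpha> (z \<bullet> z)\<bar> * norm z"
    by (rule norm_twist_minus_le)
  also have "\<dots> \<le> \<bar>\<alpha>\<bar> * sqrt b"
    using abs_twist_angle_le \<open>norm z \<le> sqrt b\<close> by (intro mult_mono) auto
  finally show ?thesis .
qed

lemma onorm_frechet_derivative_twist_angle_minus_le:
  assumes "0 \<le> a" and "a < b"
  shows "onorm (\<lambda>v. frechet_derivative (twist (twist_angle a b \<alpha>)) (at z) v - v)
    \<le> \<bar>\<alpha>\<bar> * (1 + 3 * b / (b - a))"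
proof -
  have "frechet_derivative (twist (twist_angle a b \<alpha>)) (at z)
      = twist_derivative (twist_angle a b \<alpha>) (twist_angle' a b \<alpha>) z"
    by (rule frechet_derivative_at[OF has_derivative_twist[OF has_real_derivative_twist_angle], symmetric])
  then have "onorm (\<lambda>v. frechet_derivative (twist (twist_angle a b \<alpha>)) (at z) v - v)
      \<le> \<bar>twist_angle a b \<alpha> (z \<bullet> z)\<bar> + 2 * (\<bar>twist_angle' a b \<alpha> (z \<bullet> z)\<bar> * (z \<bullet> z))"
    using onorm_twist_derivative_minus_le by (simp add: mult.assoc)
  also have "\<dots> \<le> \<bar>\<alpha>\<bar> + 2 * (3/2 * \<bar>\<alpha>\<bar> * b / (b - a))"
    using abs_twist_angle_le abs_twist_angle'_mult_le[OF assms] by (intro add_mono mult_left_mono) auto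
  finally show ?thesis
    using assms by (simp add: field_simps)
qed

lemma rotation_extends_to_twist:
  fixes k r \<alpha> :: real
  assumes "0 \<le> k" and "k < 1" and "0 < r"
  obtains h :: "real^2 \<Rightarrow> real^2"
  where "C1_diffeo h" and "area_preserving h"
    and "\<And>z. r \<le> norm z \<Longrightarrow> h z = z" and "\<And>z. norm z \<le> sqrt k * r \<Longrightarrow> h z = rot \<alpha> *v z"
    and "\<And>z. norm (h z) = norm z" and "\<And>z. norm (h z - z) \<le> \<bar>\<alpha>\<bar> * r"
    and "\<And>z. onorm (\<lambda>v. frechet_derivative h (at z) v - v) \<le> \<bar>\<alpha>\<bar> * (1 + 3 / (1 - k))"
proof -
  let ?h = "twist (twist_angle (k * r\<^sup>2) (r\<^sup>2) \<alpha>)"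
  have radii: "0 \<le> k * r\<^sup>2" "k * r\<^sup>2 < r\<^sup>2"
    using assms by simp_all
  have ratio: "3 * r\<^sup>2 / (r\<^sup>2 - k * r\<^sup>2) = 3 / (1 - k)"
    using assms by (simp add: field_simps)
  show thesis
  proof (rule that[of ?h])
    show "C1_diffeo ?h"
      by (rule C1_diffeo_twist[OF has_real_derivative_twist_angle continuous_on_twist_angle'])
    show "area_preserving ?h"
      by (rule area_preserving_twist[OF has_real_derivative_twist_angle])
    show "?h z = z" if "r \<le> norm z" for z
    proof (rule twist_twist_angle_outer[OF radii(2)])
      show "r\<^sup>2 \<le> z \<bullet> z"
        using that assms by (simp add: power_mono flip: power2_norm_eq_inner)
    qed
    show "?h z = rot \<alpha> *v z" if "norm z \<le> sqrt k * r" for z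
    proof (rule twist_twist_angle_inner[OF radii(2)])
      have "(norm z)\<^sup>2 \<le> (sqrt k * r)\<^sup>2"
        using that by (intro power_mono) auto
      then show "z \<bullet> z \<le> k * r\<^sup>2"
        using assms by (simp add: power2_norm_eq_inner power_mult_distrib)
    qed
    show "norm (?h z) = norm z" for z
      by (rule norm_twist)
    show "norm (?h z - z) \<le> \<bar>\<alpha>\<bar> * r" for z
      using norm_twist_twist_angle_minus_le[OF radii] assms by simp
    show "onorm (\<lambda>v. frechet_derivative ?h (at z) v - v) \<le> \<bar>\<alpha>\<bar> * (1 + 3 / (1 - k))" for z
      using onorm_frechet_derivative_twist_angle_minus_le[OF radii, of \<alpha> z] by (simp only: ratio)
  qed
qed

theorem mainTheorem10:
  fixes \<epsilon>1 k :: real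
  assumes "\<epsilon>1 > 0" and "0 < k" and "k < 1"
  shows "\<exists>\<alpha>0>0. \<forall>\<alpha> r. \<bar>\<alpha>\<bar> \<le> \<alpha>0 \<and> r > 0 \<longrightarrow>
           (\<exists>h :: real^2 \<Rightarrow> real^2. C1_diffeo h \<and> area_preserving h \<and>
              (\<forall>z. norm z \<ge> r \<longrightarrow> h z = z) \<and>
              (\<forall>z. norm z \<le> sqrt k * r \<longrightarrow> h z = rot \<alpha> *v z) \<and>
              (\<forall>z. norm (h z) = norm z) \<and>
              (\<forall>z. norm (h z - z) \<le> \<bar>\<alpha>\<bar> * r) \<and>
              (\<forall>z. onorm (\<lambda>v. frechet_derivative h (at z) v - v) \<le> \<epsilon>1))"
proof (intro exI[of _ "\<epsilon>1 / (1 + 3 / (1 - k))"] conjI allI impI)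
  show "\<epsilon>1 / (1 + 3 / (1 - k)) > 0"
    using assms by (intro divide_pos_pos add_pos_pos) auto
  fix \<alpha> r :: real
  assume "\<bar>\<alpha>\<bar> \<le> \<epsilon>1 / (1 + 3 / (1 - k)) \<and> r > 0"
  then have small: "\<bar>\<alpha>\<bar> * (1 + 3 / (1 - k)) \<le> \<epsilon>1" and r: "r > 0"
    using assms by (auto simp: field_simps)
  have "0 \<le> k"
    using assms by simp
  from this assms(3) r obtain h :: "real^2 \<Rightarrow> real^2" where h: "C1_diffeo h" "area_preserving h"
    "\<And>z. r \<le> norm z \<Longrightarrow> h z = z" "\<And>z. norm z \<le> sqrt k * r \<Longrightarrow> h z = rot \<alpha> *v z"
    "\<And>z. norm (h z) = norm z" "\<And>z. norm (h z - z) \<le> \<bar>\<alpha>\<bar> * r"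
    "\<And>z. onorm (\<lambda>v. frechet_derivative h (at z) v - v) \<le> \<bar>\<alpha>\<bar> * (1 + 3 / (1 - k))"
    by (rule rotation_extends_to_twist[where \<alpha> = \<alpha>]) blast
  show "\<exists>h :: real^2 \<Rightarrow> real^2. C1_diffeo h \<and> area_preserving h \<and>
      (\<forall>z. norm z \<ge> r \<longrightarrow> h z = z) \<and> (\<forall>z. norm z \<le> sqrt k * r \<longrightarrow> h z = rot \<alpha> *v z) \<and>
      (\<forall>z. norm (h z) = norm z) \<and> (\<forall>z. norm (h z - z) \<le> \<bar>\<alpha>\<bar> * r) \<and>
      (\<forall>z. onorm (\<lambda>v. frechet_derivative h (at z) v - v) \<le> \<epsilon>1)"
    using h order_trans[OF h(7) small] by (intro exI[of _ h] conjI allI impI) simp_all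
qed

end
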